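(* Let $\mathfrak s$ be a $4$-dimensional real Lie algebra admitting an abelian complex structure, and let $\mathfrak z$ be its center. Then $\mathfrak s/\mathfrak z$ is isomorphic to $\mathfrak{aff}(A)$ for some finite-dimensional real commutative associative algebra $A$ (possibly $A=0$, or with trivial multiplication).
   Context: An abelian complex structure on a real Lie algebra $\mathfrak g$ is a linear map $J$ with $J^2=-\mathrm{Id}$ and $[Jx,Jy]=[x,y]$ for all $x,y$. For a commutative associative algebra $A$, $\mathfrak{aff}(A)$ is the Lie algebra $A\oplus A$ with bracket $[(a,b),(a',b')]=(0,ab'-a'b)$. *)

theory Defs
  imports "HOL-Analysis.Analysis" "HOL-Library.Function_Algebras"
begin

text \<open>Pointwise real vector space structure on functions, so that
  nat \<Rightarrow> real can serve as an ambient space for arbitrary finite-dimensional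
  real algebras.\<close>

instantiation "fun" :: (type, real_vector) real_vector
begin
definition scaleR_fun :: "real \<Rightarrow> ('a \<Rightarrow> 'b) \<Rightarrow> 'a \<Rightarrow> 'b"
  where "scaleR_fun r f = (\<lambda>x. r *\<^sub>R f x)"
instance
  by standard (auto simp: scaleR_fun_def fun_eq_iff scaleR_add_right scaleR_add_left)
end

definition lie_algebra :: "('a::real_vector \<Rightarrow> 'a \<Rightarrow> 'a) \<Rightarrow> bool" where
  "lie_algebra br \<longleftrightarrow> bilinear br \<and> (\<forall>x. br x x = 0) \<and>
     (\<forall>x y z. br x (br y z) + br y (br z x) + br z (br x y) = 0)"

definition abelian_complex_structure ::
  "('a::real_vector \<Rightarrow> 'a \<Rightarrow> 'a) \<Rightarrow> ('a \<Rightarrow> 'a) \<Rightarrow> bool" where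
  "abelian_complex_structure br J \<longleftrightarrow> linear J \<and> (\<forall>x. J (J x) = - x) \<and>
     (\<forall>x y. br (J x) (J y) = br x y)"

definition lie_center :: "('a::real_vector \<Rightarrow> 'a \<Rightarrow> 'a) \<Rightarrow> 'a set" where
  "lie_center br = {x. \<forall>y. br x y = 0}"

text \<open>A finite-dimensional real commutative associative (not necessarily unital)
  algebra, with underlying space the linear subspace A and multiplication m
  (only its restriction to A matters).\<close>
definition fd_comm_assoc_algebra :: "'b::real_vector set \<Rightarrow> ('b \<Rightarrow> 'b \<Rightarrow> 'b) \<Rightarrow> bool" where
  "fd_comm_assoc_algebra A m \<longleftrightarrow> subspace A \<and> (\<exists>B. finite B \<and> B \<subseteq> A \<and> span B = A) \<and>
     (\<forall>a\<in>A. \<forall>b\<in>A. m a b \<in> A) \<and>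
     (\<forall>a\<in>A. \<forall>b\<in>A. \<forall>c\<in>A. m (a + b) c = m a c + m b c) \<and>
     (\<forall>r. \<forall>a\<in>A. \<forall>b\<in>A. m (r *\<^sub>R a) b = r *\<^sub>R m a b) \<and>
     (\<forall>a\<in>A. \<forall>b\<in>A. m a b = m b a) \<and>
     (\<forall>a\<in>A. \<forall>b\<in>A. \<forall>c\<in>A. m (m a b) c = m a (m b c))"

definition aff_bracket :: "('b::real_vector \<Rightarrow> 'b \<Rightarrow> 'b) \<Rightarrow> 'b \<times> 'b \<Rightarrow> 'b \<times> 'b \<Rightarrow> 'b \<times> 'b" where
  "aff_bracket m p q = (0, m (fst p) (snd q) - m (fst q) (snd p))"

text \<open>s / center(s) is isomorphic (as Lie algebra) to aff(A): by the first
  isomorphism theorem, equivalently there is a surjective Lie algebra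
  homomorphism s \<rightarrow> aff(A) whose kernel is exactly the center.\<close>
definition quotient_by_center_iso_aff ::
  "('a::real_vector \<Rightarrow> 'a \<Rightarrow> 'a) \<Rightarrow> 'b::real_vector set \<Rightarrow> ('b \<Rightarrow> 'b \<Rightarrow> 'b) \<Rightarrow> bool" where
  "quotient_by_center_iso_aff br A m \<longleftrightarrow> (\<exists>\<phi> :: 'a \<Rightarrow> 'b \<times> 'b.
     linear \<phi> \<and> range \<phi> = A \<times> A \<and> {x. \<phi> x = 0} = lie_center br \<and>
     (\<forall>x y. \<phi> (br x y) = aff_bracket m (\<phi> x) (\<phi> y)))"

end

theory Submission
  imports Defs
begin

text \<open>
  Two facts drive the proof. First, an abelian complex structure forces the derived algebra
  \<open>s'\<close> to be abelian: the product \<open>mu x y = [x, y] - J [J x, y]\<close> satisfies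
  \<open>mu x y - mu y x = 2 [x, y]\<close>, and the Jacobi identity together with \<open>[J x, J y] = [x, y]\<close>
  makes \<open>mu (mu a b) (mu c d)\<close> symmetric enough to give \<open>[[a, b], [c, d]] = 0\<close>.
  Second, \<open>s/z \<cong> aff(A)\<close> as soon as \<open>s = T(a) \<oplus> a \<oplus> z\<close> with \<open>T(a)\<close> and \<open>a\<close>
  abelian modulo \<open>z\<close>, \<open>[T u, v] \<in> a + z\<close> and \<open>[T u, v] \<equiv> [T v, u]\<close> modulo \<open>z\<close>: then
  \<open>u \<cdot> v = [T u, v] mod z\<close> is a commutative associative product on \<open>A = a\<close>.

  In dimension four such a decomposition is found case by case. If \<open>z = s\<close>, take \<open>a = 0\<close>.
  Otherwise a nonzero centre is a \<open>J\<close>-invariant plane, \<open>s/z\<close> is spanned by \<open>x\<close> and \<open>J x\<close>,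
  and \<open>a\<close> is a line with \<open>T = J\<close>. If \<open>z = 0\<close>, then \<open>s'\<close> is either a \<open>J\<close>-invariant plane,
  which has an abelian complement, or a totally real plane, with \<open>a = s'\<close> and \<open>T = J\<close>; it
  cannot be a line, because a centreless Lie algebra with one-dimensional derived algebra has
  dimension two.
\<close>

section \<open>Linear algebra\<close>

lemma in_span_pair_iff: "x \<in> span {a, b} \<longleftrightarrow> (\<exists>s t. x = s *\<^sub>R a + t *\<^sub>R b)"
proof -
  have "x \<in> span {a, b} \<longleftrightarrow> (\<exists>k. x - k *\<^sub>R a \<in> span {b})" by (rule span_breakdown_eq)
  also have "\<dots> \<longleftrightarrow> (\<exists>k t. x - k *\<^sub>R a = t *\<^sub>R b)" by (auto simp: span_singleton)
  also have "\<dots> \<longleftrightarrow> (\<exists>s t. x = s *\<^sub>R a + t *\<^sub>R b)" by (metis add_diff_cancel_left' diff_add_cancel add.commute)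
  finally show ?thesis .
qed

lemma combination_of_four_independent:
  fixes p q r s :: "'a::euclidean_space"
  assumes dim: "DIM('a) = 4"
    and indep: "\<And>a b c d. a *\<^sub>R p + b *\<^sub>R q + c *\<^sub>R r + d *\<^sub>R s = 0 \<Longrightarrow> a = 0 \<and> b = 0 \<and> c = 0 \<and> d = 0"
  obtains a b c d where "y = a *\<^sub>R p + b *\<^sub>R q + c *\<^sub>R r + d *\<^sub>R s"
proof -
  have distinct: "p \<noteq> q" "p \<noteq> r" "p \<noteq> s" "q \<noteq> r" "q \<noteq> s" "r \<noteq> s"
    using indep[of 1 "-1" 0 0] indep[of 1 0 "-1" 0] indep[of 1 0 0 "-1"]
      indep[of 0 1 "-1" 0] indep[of 0 1 0 "-1"] indep[of 0 0 1 "-1"] by auto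
  define B where "B = {p, q, r, s}"
  have sum_B: "(\<Sum>v\<in>B. u v *\<^sub>R v) = u p *\<^sub>R p + u q *\<^sub>R q + u r *\<^sub>R r + u s *\<^sub>R s" for u
    unfolding B_def using distinct by (simp add: add.assoc)
  have "finite B" by (simp add: B_def)
  have "independent B"
  proof
    assume "dependent B"
    then obtain u where u: "\<exists>v\<in>B. u v \<noteq> 0" "(\<Sum>v\<in>B. u v *\<^sub>R v) = 0"
      using dependent_finite[OF \<open>finite B\<close>] by blast
    then have "u p = 0 \<and> u q = 0 \<and> u r = 0 \<and> u s = 0" using indep by (simp add: sum_B)
    with u(1) show False by (auto simp: B_def)
  qed
  then have "UNIV \<subseteq> span B"
    using card_eq_dim[of B UNIV] distinct dim by (simp add: B_def)
  then obtain u where "y = (\<Sum>v\<in>B. u v *\<^sub>R v)"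
    using span_finite[OF \<open>finite B\<close>] by blast
  then show ?thesis using that sum_B by metis
qed

lemma linear_functionals_common_zero:
  fixes f g :: "'a::euclidean_space \<Rightarrow> real"
  assumes dim: "DIM('a) > 2" and "linear f" "linear g"
  obtains x where "x \<noteq> 0" "f x = 0" "g x = 0"
proof -
  define h where "h x = (f x, g x)" for x
  have "linear h"
    unfolding h_def using assms(2,3) by (simp add: linear_conv_bounded_linear bounded_linear_Pair)
  have "\<not> inj h"
  proof
    assume "inj h"
    then have "dim (range h) = dim (UNIV :: 'a set)"
      using dim_image_eq[OF \<open>linear h\<close>] by (metis inj_on_subset subset_UNIV)
    moreover have "dim (range h) \<le> dim (UNIV :: (real \<times> real) set)" by (rule dim_subset) simp
    ultimately show False using dim by simp
  qed
  then obtain x where "x \<noteq> 0" "h x = 0"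
    using linear_inj_iff_eq_0[OF \<open>linear h\<close>] by blast
  then show ?thesis using that by (simp add: h_def zero_prod_def)
qed

lemma independent_pairI:
  assumes "\<And>s t. s *\<^sub>R x + t *\<^sub>R y = 0 \<Longrightarrow> s = 0 \<and> t = 0"
  shows "independent {x, y}" "x \<noteq> y"
proof -
  show "x \<noteq> y" using assms[of 1 "-1"] by auto
  show "independent {x, y}"
  proof
    assume "dependent {x, y}"
    then obtain u where u: "\<exists>v\<in>{x, y}. u v \<noteq> 0" "(\<Sum>v\<in>{x, y}. u v *\<^sub>R v) = 0"
      using dependent_finite[of "{x, y}"] by auto
    with \<open>x \<noteq> y\<close> have "u x *\<^sub>R x + u y *\<^sub>R y = 0" by simp
    with u(1) assms show False by blast
  qed
qed

lemma linear_inj_on_imp_surj_on: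
  fixes f :: "'a::euclidean_space \<Rightarrow> 'a"
  assumes "linear f" "subspace S" "f ` S \<subseteq> S" "inj_on f S"
  shows "f ` S = S"
proof (rule subspace_dim_equal)
  show "subspace (f ` S)" using assms(1,2) by (rule linear_subspace_image)
  have "dim (f ` S) = dim S"
    using dim_image_eq[OF assms(1), of S] assms(2,4) by (simp add: span_eq_iff[THEN iffD2])
  then show "dim S \<le> dim (f ` S)" by simp
qed (use assms in auto)

section \<open>Lie algebras\<close>

locale lie_bracket =
  fixes br :: "'a::real_vector \<Rightarrow> 'a \<Rightarrow> 'a"
  assumes lie: "lie_algebra br"
begin

lemma bilinear: "bilinear br"
  using lie by (simp add: lie_algebra_def)

lemma bracket_self [simp]: "br x x = 0"
  using lie by (simp add: lie_algebra_def)

lemma jacobi: "br x (br y z) + br y (br z x) + br z (br x y) = 0"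
  using lie by (simp add: lie_algebra_def)

lemma bracket_add_left [simp]: "br (x + y) z = br x z + br y z"
  by (rule bilinear_ladd[OF bilinear])
lemma bracket_add_right [simp]: "br x (y + z) = br x y + br x z"
  by (rule bilinear_radd[OF bilinear])
lemma bracket_diff_left [simp]: "br (x - y) z = br x z - br y z"
  by (rule bilinear_lsub[OF bilinear])
lemma bracket_diff_right [simp]: "br x (y - z) = br x y - br x z"
  by (rule bilinear_rsub[OF bilinear])
lemma bracket_minus_left [simp]: "br (- x) y = - br x y"
  by (rule bilinear_lneg[OF bilinear])
lemma bracket_minus_right [simp]: "br x (- y) = - br x y"
  by (rule bilinear_rneg[OF bilinear])
lemma bracket_scaleR_left [simp]: "br (c *\<^sub>R x) y = c *\<^sub>R br x y"
  by (rule bilinear_lmul[OF bilinear])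
lemma bracket_scaleR_right [simp]: "br x (c *\<^sub>R y) = c *\<^sub>R br x y"
  by (rule bilinear_rmul[OF bilinear])
lemma bracket_zero_left [simp]: "br 0 y = 0"
  by (rule bilinear_lzero[OF bilinear])
lemma bracket_zero_right [simp]: "br x 0 = 0"
  by (rule bilinear_rzero[OF bilinear])

lemma bracket_antisym: "br y x = - br x y"
proof -
  have "0 = br (x + y) (x + y)" by simp
  also have "\<dots> = br x y + br y x"
    by (simp only: bracket_add_left bracket_add_right) simp
  finally have "br x y + br y x = 0" by (rule sym)
  then show ?thesis by (simp add: add_eq_0_iff)
qed

lemma bracket_leibniz: "br (br x y) z = br x (br y z) - br y (br x z)"
  using jacobi[of x y z] bracket_antisym[of "br x y" z] bracket_antisym[of z x]
  by (simp add: algebra_simps)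

lemma subspace_center: "subspace (lie_center br)"
  unfolding subspace_def lie_center_def by simp

lemma center_bracket_left [simp]: "c \<in> lie_center br \<Longrightarrow> br c y = 0"
  by (simp add: lie_center_def)

lemma center_bracket_right [simp]: "c \<in> lie_center br \<Longrightarrow> br y c = 0"
  using bracket_antisym[of y c] by simp


lemma centralizer_of_line_abelian:
  assumes line: "\<And>x y. br x y \<in> span {w}"
    and "br y0 w \<noteq> 0" "br x w = 0" "br k w = 0"
  shows "br x k = 0"
proof -
  have "br w k = 0" using \<open>br k w = 0\<close> bracket_antisym[of k w] by simp
  obtain a b c where abc: "br y0 x = a *\<^sub>R w" "br y0 k = b *\<^sub>R w" "br x k = c *\<^sub>R w"
    using line[of y0 x] line[of y0 k] line[of x k] by (auto simp: span_singleton)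
  have "br y0 (br x k) = br (br y0 x) k + br x (br y0 k)"
    using bracket_leibniz[of y0 x k] by simp
  also have "\<dots> = 0" using abc \<open>br w k = 0\<close> \<open>br x w = 0\<close> by simp
  finally have "c *\<^sub>R br y0 w = 0" using abc(3) by simp
  with \<open>br y0 w \<noteq> 0\<close> show ?thesis using abc(3) by simp
qed
end

definition derived_algebra :: "('a::real_vector \<Rightarrow> 'a \<Rightarrow> 'a) \<Rightarrow> 'a set" where
  "derived_algebra br = span {br x y | x y. True}"

lemma bracket_in_derived_algebra: "br x y \<in> derived_algebra br"
  unfolding derived_algebra_def by (rule span_base) blast

lemma subspace_derived_algebra: "subspace (derived_algebra br)"
  unfolding derived_algebra_def by (rule subspace_span)

lemma centerless_derived_line_DIM_le_2:
  fixes br :: "'a::euclidean_space \<Rightarrow> 'a \<Rightarrow> 'a"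
  assumes "lie_algebra br" and centerless: "lie_center br = {0}"
    and line: "\<And>x y. br x y \<in> span {w}"
  shows "DIM('a) \<le> 2"
proof (rule ccontr)
  interpret lie_bracket br by (rule lie_bracket.intro) fact
  assume "\<not> DIM('a) \<le> 2"
  then have dim: "DIM('a) > 2" by simp
  have central_eq_0: "x = 0" if "\<And>y. br x y = 0" for x
    using that centerless unfolding lie_center_def by blast
  have "w \<noteq> 0"
  proof
    assume "w = 0"
    then have "br (SOME b. b \<in> Basis) y = 0" for y
      using line[of _ y] by simp
    then have "(SOME b. b \<in> Basis) = (0 :: 'a)" by (rule central_eq_0)
    with SOME_Basis nonzero_Basis show False by metis
  qed
  define cf where "cf z = (z \<bullet> w) / (w \<bullet> w)" for z
  have linear_cf: "linear cf"
    unfolding cf_def by (rule linearI) (simp_all add: inner_add_left add_divide_distrib)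
  have br_cf: "br x y = cf (br x y) *\<^sub>R w" for x y
  proof -
    obtain k where "br x y = k *\<^sub>R w" using line[of x y] by (auto simp: span_singleton)
    then show ?thesis using \<open>w \<noteq> 0\<close> by (simp add: cf_def)
  qed
  obtain y0 where "br y0 w \<noteq> 0"
  proof -
    obtain y where "br w y \<noteq> 0" using central_eq_0 \<open>w \<noteq> 0\<close> by blast
    then show ?thesis using that bracket_antisym[of w y] by auto
  qed
  define t where "t = cf (br y0 w)"
  have y0_w: "br y0 w = t *\<^sub>R w" unfolding t_def by (rule br_cf)
  with \<open>br y0 w \<noteq> 0\<close> have "t \<noteq> 0" by auto
  have lin: "linear (\<lambda>x. cf (br x w))" "linear (\<lambda>x. cf (br x y0))"
    using linear_cf by (auto intro!: linearI simp: linear_add linear_scale)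
  obtain x0 where "x0 \<noteq> 0" "cf (br x0 w) = 0" "cf (br x0 y0) = 0"
    using linear_functionals_common_zero[OF dim lin] by blast
  then have x0: "br x0 w = 0" "br x0 y0 = 0"
    using br_cf[of x0 w] br_cf[of x0 y0] by simp_all
  have "br x0 y = 0" for y
  proof -
    define k where "k = y - (cf (br y w) / t) *\<^sub>R y0"
    have "br k w = 0"
      unfolding k_def using br_cf[of y w] y0_w \<open>t \<noteq> 0\<close> by simp
    then have "br x0 k = 0"
      using centralizer_of_line_abelian[OF line \<open>br y0 w \<noteq> 0\<close> x0(1)] by blast
    moreover have "y = k + (cf (br y w) / t) *\<^sub>R y0" by (simp add: k_def)
    ultimately show ?thesis
      using x0(2) by (metis bracket_add_right bracket_scaleR_right scaleR_zero_right add_0)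
  qed
  with \<open>x0 \<noteq> 0\<close> central_eq_0 show False by blast
qed

section \<open>Abelian complex structures\<close>

locale abelian_complex = lie_bracket br for br :: "'a::real_vector \<Rightarrow> 'a \<Rightarrow> 'a" +
  fixes J :: "'a \<Rightarrow> 'a"
  assumes abelian_complex: "abelian_complex_structure br J"
begin

lemma linear_J: "linear J"
  using abelian_complex by (simp add: abelian_complex_structure_def)

lemma J_J [simp]: "J (J x) = - x"
  using abelian_complex by (simp add: abelian_complex_structure_def)

lemma bracket_J_J [simp]: "br (J x) (J y) = br x y"
  using abelian_complex by (simp add: abelian_complex_structure_def)

lemma J_add [simp]: "J (x + y) = J x + J y" by (rule linear_add[OF linear_J])
lemma J_diff [simp]: "J (x - y) = J x - J y" by (rule linear_diff[OF linear_J])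
lemma J_zero [simp]: "J 0 = 0" by (rule linear_0[OF linear_J])
lemma J_scaleR [simp]: "J (c *\<^sub>R x) = c *\<^sub>R J x" by (rule linear_scale[OF linear_J])

lemma bracket_J_right [simp]: "br x (J y) = - br (J x) y"
  using bracket_J_J[of x "J y"] by simp

lemma bracket_J_left_swap: "br (J x) y = br (J y) x"
  using bracket_antisym[of x "J y"] by simp

lemma J_center:
  assumes "c \<in> lie_center br"
  shows "J c \<in> lie_center br"
proof -
  have "br (J c) y = 0" for y
    using bracket_J_left_swap[of c y] assms by simp
  then show ?thesis unfolding lie_center_def by blast
qed

definition mu :: "'a \<Rightarrow> 'a \<Rightarrow> 'a" where
  "mu x y = br x y - J (br (J x) y)"

lemma mu_diff_left [simp]: "mu (x - y) z = mu x z - mu y z"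
  by (simp add: mu_def algebra_simps)
lemma mu_diff_right [simp]: "mu x (y - z) = mu x y - mu x z"
  by (simp add: mu_def algebra_simps)

lemma mu_diff_swap: "mu x y - mu y x = 2 *\<^sub>R br x y"
  using bracket_J_left_swap[of y x] bracket_antisym[of x y] by (simp add: mu_def scaleR_2)

lemma mu_mu_left_swap: "mu a (mu b c) = mu c (mu b a)"
proof -
  have re: "br a (br b c) + br (J a) (br (J b) c) = br c (br b a) + br (J c) (br (J b) a)"
    using jacobi[of a b c] bracket_leibniz[of "J a" "J c" b] bracket_antisym[of "br a c" b]
      bracket_antisym[of a b] bracket_antisym[of c a]
      bracket_J_left_swap[of b c] bracket_J_left_swap[of b a]
    by (simp add: algebra_simps)
  have im: "br (J a) (br b c) - br a (br (J b) c) = br (J c) (br b a) - br c (br (J b) a)"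
    using bracket_leibniz[of "J a" b c] bracket_leibniz[of "J c" b a]
      bracket_J_left_swap[of a c] bracket_J_left_swap[of a b] bracket_J_left_swap[of c b]
      bracket_antisym[of "br (J b) c" a] bracket_antisym[of "br (J b) a" c]
    by (simp add: algebra_simps)
  have expand: "mu x (mu y z) = (br x (br y z) + br (J x) (br (J y) z)) - J (br (J x) (br y z) - br x (br (J y) z))"
    for x y z
    by (simp add: mu_def algebra_simps)
  show ?thesis unfolding expand re im ..
qed

lemma mu_mu_right_commute: "mu (mu b c) a = mu (mu b a) c"
proof -
  have re: "br (br b c) a - br (J a) (br (J b) c) = br (br b a) c - br (J c) (br (J b) a)"
    using jacobi[of a b c] bracket_leibniz[of "J c" "J a" b] bracket_antisym[of "br c a" b]
      bracket_antisym[of "br b c" a] bracket_antisym[of "br b a" c] bracket_antisym[of a b]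
      bracket_J_left_swap[of b a] bracket_J_left_swap[of b c]
    by (simp add: algebra_simps)
  have im: "br (J a) (br b c) + br (br (J b) c) a = br (J c) (br b a) + br (br (J b) a) c"
  proof -
    have leibniz: "br (J x) (br b z) = br (br (J x) b) z + br b (br (J x) z)" for x z
      using bracket_leibniz[of "J x" b z] by (simp add: algebra_simps)
    show ?thesis
      unfolding leibniz bracket_J_left_swap[of a c] bracket_J_left_swap[of a b] bracket_J_left_swap[of c b]
      by (simp add: algebra_simps)
  qed
  have expand: "mu (mu y z) x = (br (br y z) x - br (J x) (br (J y) z))
      - J (br (J x) (br y z) + br (br (J y) z) x)" for x y z
    using bracket_J_left_swap[of "br (J y) z" x] bracket_J_left_swap[of "br y z" x]
    by (simp add: mu_def algebra_simps)
  show ?thesis unfolding expand re im ..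
qed

lemma mu_mu_mu_swap: "mu (mu p q) (mu r s) = mu (mu s r) (mu q p)"
proof -
  have "mu (mu p q) (mu r s) = mu (mu p (mu r s)) q" by (rule mu_mu_right_commute)
  also have "mu p (mu r s) = mu s (mu r p)" by (rule mu_mu_left_swap)
  also have "mu (mu s (mu r p)) q = mu (mu s q) (mu r p)" by (rule mu_mu_right_commute)
  also have "\<dots> = mu p (mu r (mu s q))" by (rule mu_mu_left_swap)
  also have "mu r (mu s q) = mu q (mu s r)" by (rule mu_mu_left_swap)
  also have "mu p (mu q (mu s r)) = mu (mu s r) (mu q p)" by (rule mu_mu_left_swap)
  finally show ?thesis .
qed

lemma bracket_of_brackets_eq_0: "br (br a b) (br c d) = 0"
proof -
  define X where "X = mu a b - mu b a"
  define Y where "Y = mu c d - mu d c"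
  have "mu X Y = mu Y X"
    unfolding X_def Y_def
    using mu_mu_mu_swap[of a b c d] mu_mu_mu_swap[of a b d c]
      mu_mu_mu_swap[of b a c d] mu_mu_mu_swap[of b a d c]
    by (simp add: algebra_simps)
  then have "2 *\<^sub>R br X Y = 0"
    using mu_diff_swap[of X Y] by simp
  moreover have "X = 2 *\<^sub>R br a b" "Y = 2 *\<^sub>R br c d"
    unfolding X_def Y_def by (rule mu_diff_swap)+
  ultimately show ?thesis by simp
qed

lemma derived_algebra_abelian:
  assumes "l \<in> derived_algebra br" "l' \<in> derived_algebra br"
  shows "br l l' = 0"
proof -
  have generators: "br (br x y) l' = 0" for x y
    using assms(2) unfolding derived_algebra_def
    by (induction rule: span_induct) (auto simp: subspace_def bracket_of_brackets_eq_0)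
  show ?thesis
    using assms(1) unfolding derived_algebra_def
    by (induction rule: span_induct) (auto simp: subspace_def generators)
qed

lemma J_pair_independent_modulo:
  assumes W: "subspace W" "\<And>w. w \<in> W \<Longrightarrow> J w \<in> W" and x: "x \<notin> W"
    and comb: "\<alpha> *\<^sub>R x + \<beta> *\<^sub>R J x \<in> W"
  shows "\<alpha> = 0 \<and> \<beta> = 0"
proof (rule ccontr)
  assume nonzero: "\<not> (\<alpha> = 0 \<and> \<beta> = 0)"
  define t where "t = \<alpha> *\<^sub>R x + \<beta> *\<^sub>R J x"
  have "t \<in> W" using comb by (simp add: t_def)
  moreover from this have "J t \<in> W" by (rule W(2))
  ultimately have "\<alpha> *\<^sub>R t - \<beta> *\<^sub>R J t \<in> W"
    using W(1) by (simp add: subspace_diff subspace_scale)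
  moreover have "\<alpha> *\<^sub>R t - \<beta> *\<^sub>R J t = (\<alpha>\<^sup>2 + \<beta>\<^sup>2) *\<^sub>R x"
    by (simp add: t_def algebra_simps power2_eq_square)
  moreover have "\<alpha>\<^sup>2 + \<beta>\<^sup>2 \<noteq> 0"
    using nonzero by (simp add: sum_power2_eq_zero_iff)
  ultimately have "inverse (\<alpha>\<^sup>2 + \<beta>\<^sup>2) *\<^sub>R ((\<alpha>\<^sup>2 + \<beta>\<^sup>2) *\<^sub>R x) \<in> W"
    using subspace_scale[OF W(1)] by metis
  with \<open>\<alpha>\<^sup>2 + \<beta>\<^sup>2 \<noteq> 0\<close> x show False by simp
qed

lemma J_frame_independent:
  assumes W: "subspace W" "\<And>w. w \<in> W \<Longrightarrow> J w \<in> W"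
    and q: "q \<notin> W" and p: "p \<in> W" "p \<noteq> 0"
    and comb: "a *\<^sub>R q + b *\<^sub>R J q + c *\<^sub>R p + d *\<^sub>R J p = 0"
  shows "a = 0 \<and> b = 0 \<and> c = 0 \<and> d = 0"
proof -
  have "c *\<^sub>R p + d *\<^sub>R J p \<in> W"
    using W p by (simp add: subspace_add subspace_scale)
  moreover have "a *\<^sub>R q + b *\<^sub>R J q = - (c *\<^sub>R p + d *\<^sub>R J p)"
    using comb by (simp add: algebra_simps eq_neg_iff_add_eq_0)
  ultimately have "a *\<^sub>R q + b *\<^sub>R J q \<in> W"
    using subspace_neg[OF W(1)] by metis
  then have ab: "a = 0 \<and> b = 0"
    using J_pair_independent_modulo[OF W q] by blast
  then have "c *\<^sub>R p + d *\<^sub>R J p \<in> {0}"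
    using comb by simp
  then have "c = 0 \<and> d = 0"
    using J_pair_independent_modulo[of "{0}" p c d] p(2) by simp
  with ab show ?thesis by simp
qed

lemma J_mem_span_J_pair: "w \<in> span {p, J p} \<Longrightarrow> J w \<in> span {p, J p}"
proof -
  assume "w \<in> span {p, J p}"
  then obtain s t where "w = s *\<^sub>R p + t *\<^sub>R J p"
    by (auto simp: in_span_pair_iff)
  then have "J w = (- t) *\<^sub>R p + s *\<^sub>R J p" by simp
  then show "J w \<in> span {p, J p}"
    unfolding in_span_pair_iff by blast
qed

lemma independent_J_pair: "p \<noteq> 0 \<Longrightarrow> independent {p, J p} \<and> p \<noteq> J p"
  using independent_pairI[of p "J p"] J_pair_independent_modulo[of "{0}" p] by simp

lemma commutes_with_J_pair_imp_central:
  assumes complement: "\<And>y. \<exists>\<alpha> \<beta>. y - \<alpha> *\<^sub>R v - \<beta> *\<^sub>R J v \<in> derived_algebra br"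
    and q: "q \<in> derived_algebra br" "br v q = 0" "br v (J q) = 0"
  shows "q \<in> lie_center br"
proof -
  have "br q y = 0" for y
  proof -
    obtain \<alpha> \<beta> where m: "y - \<alpha> *\<^sub>R v - \<beta> *\<^sub>R J v \<in> derived_algebra br"
      using complement by blast
    have "br q y = \<alpha> *\<^sub>R br q v + \<beta> *\<^sub>R br q (J v) + br q (y - \<alpha> *\<^sub>R v - \<beta> *\<^sub>R J v)"
      by (simp add: algebra_simps)
    moreover have "br q v = 0" using q(2) bracket_antisym[of q v] by simp
    moreover have "br q (J v) = 0"
      using q(3) bracket_J_left_swap[of q v] bracket_antisym[of v "J q"] by simp
    moreover have "br q (y - \<alpha> *\<^sub>R v - \<beta> *\<^sub>R J v) = 0"
      using q(1) m by (rule derived_algebra_abelian)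
    ultimately show ?thesis by simp
  qed
  then show ?thesis unfolding lie_center_def by blast
qed

lemma ad_inj_on_derived_algebra:
  assumes centerless: "lie_center br = {0}"
    and J_L: "\<And>q. q \<in> derived_algebra br \<Longrightarrow> J q \<in> derived_algebra br"
    and complement: "\<And>y. \<exists>\<alpha> \<beta>. y - \<alpha> *\<^sub>R v - \<beta> *\<^sub>R J v \<in> derived_algebra br"
    and p: "p \<in> derived_algebra br" "br v p = 0"
  shows "p = 0"
proof -
  have zero_if_commutes: "q = 0"
    if "q \<in> derived_algebra br" "br v q = 0" "br v (J q) = 0" for q
    using commutes_with_J_pair_imp_central[OF complement that] centerless by simp
  have twice: "br v (br v (J q)) = br v (J (br v q))" if "q \<in> derived_algebra br" for q
  proof -
    have "br (br v (J v)) q = 0"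
      using bracket_in_derived_algebra that by (rule derived_algebra_abelian)
    then show ?thesis
      using bracket_leibniz[of v "J v" q] by simp
  qed
  define m where "m = br v (J p)"
  have "m \<in> derived_algebra br" unfolding m_def by (rule bracket_in_derived_algebra)
  moreover have "br v m = 0"
    unfolding m_def twice[OF p(1)] p(2) by simp
  moreover have "br v (J m) = 0"
    using twice[OF J_L[OF p(1)]] p(2) by (simp add: m_def)
  ultimately have "br v (J p) = 0"
    using zero_if_commutes unfolding m_def by blast
  with p show ?thesis using zero_if_commutes by blast
qed

end

section \<open>Recognising quotients isomorphic to aff(A)\<close>

locale aff_decomposition = lie_bracket br for br :: "'a::euclidean_space \<Rightarrow> 'a \<Rightarrow> 'a" +
  fixes a :: "'a set" and T :: "'a \<Rightarrow> 'a"
  assumes subspace_a: "subspace a" and linear_T: "linear T"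
    and decompose: "\<And>x. \<exists>u\<in>a. \<exists>v\<in>a. x - T u - v \<in> lie_center br"
    and decompose_unique: "\<And>u v. u \<in> a \<Longrightarrow> v \<in> a \<Longrightarrow> T u + v \<in> lie_center br \<Longrightarrow> u = 0 \<and> v = 0"
    and bracket_T_T: "\<And>u v. u \<in> a \<Longrightarrow> v \<in> a \<Longrightarrow> br (T u) (T v) \<in> lie_center br"
    and bracket_a_a: "\<And>u v. u \<in> a \<Longrightarrow> v \<in> a \<Longrightarrow> br u v \<in> lie_center br"
    and bracket_T_a: "\<And>u v. u \<in> a \<Longrightarrow> v \<in> a \<Longrightarrow> \<exists>w\<in>a. br (T u) v - w \<in> lie_center br"
    and bracket_T_a_symmetric:
      "\<And>u v. u \<in> a \<Longrightarrow> v \<in> a \<Longrightarrow> br (T u) v - br (T v) u \<in> lie_center br"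
begin

lemma T_add [simp]: "T (x + y) = T x + T y" by (rule linear_add[OF linear_T])
lemma T_diff [simp]: "T (x - y) = T x - T y" by (rule linear_diff[OF linear_T])
lemma T_scaleR [simp]: "T (c *\<^sub>R x) = c *\<^sub>R T x" by (rule linear_scale[OF linear_T])
lemma T_zero [simp]: "T 0 = 0" by (rule linear_0[OF linear_T])

definition coords :: "'a \<Rightarrow> 'a \<times> 'a" where
  "coords x = (THE p. fst p \<in> a \<and> snd p \<in> a \<and> x - T (fst p) - snd p \<in> lie_center br)"

lemma coords_eqI:
  assumes "u \<in> a" "v \<in> a" "x - T u - v \<in> lie_center br"
  shows "coords x = (u, v)"
  unfolding coords_def
proof (rule the_equality)
  fix p assume p: "fst p \<in> a \<and> snd p \<in> a \<and> x - T (fst p) - snd p \<in> lie_center br"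
  have "T (fst p - u) + (snd p - v) = (x - T u - v) - (x - T (fst p) - snd p)"
    by (simp add: algebra_simps)
  also have "\<dots> \<in> lie_center br"
    using assms p subspace_diff[OF subspace_center] by blast
  finally have "T (fst p - u) + (snd p - v) \<in> lie_center br" .
  moreover have "fst p - u \<in> a" "snd p - v \<in> a"
    using p assms subspace_diff[OF subspace_a] by blast+
  ultimately have "fst p - u = 0 \<and> snd p - v = 0"
    using decompose_unique by blast
  then show "p = (u, v)" by (simp add: prod_eq_iff)
qed (use assms in simp)

lemma coords_in:
  "fst (coords x) \<in> a" "snd (coords x) \<in> a"
  "x - T (fst (coords x)) - snd (coords x) \<in> lie_center br"
proof -
  obtain u v where "u \<in> a" "v \<in> a" "x - T u - v \<in> lie_center br"
    using decompose by blast
  then show "fst (coords x) \<in> a" "snd (coords x) \<in> a"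
    "x - T (fst (coords x)) - snd (coords x) \<in> lie_center br"
    using coords_eqI by simp_all
qed

lemma linear_coords: "linear coords"
proof (rule linearI)
  fix x y
  let ?u = "fst (coords x) + fst (coords y)" and ?v = "snd (coords x) + snd (coords y)"
  have "x + y - T ?u - ?v = (x - T (fst (coords x)) - snd (coords x)) + (y - T (fst (coords y)) - snd (coords y))"
    by (simp add: algebra_simps)
  also have "\<dots> \<in> lie_center br"
    using coords_in subspace_add[OF subspace_center] by blast
  finally have "coords (x + y) = (?u, ?v)"
    using coords_in subspace_add[OF subspace_a] by (intro coords_eqI) auto
  then show "coords (x + y) = coords x + coords y"
    by (simp add: prod_eq_iff)
next
  fix c x
  let ?u = "c *\<^sub>R fst (coords x)" and ?v = "c *\<^sub>R snd (coords x)"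
  have "c *\<^sub>R x - T ?u - ?v = c *\<^sub>R (x - T (fst (coords x)) - snd (coords x))"
    by (simp add: algebra_simps)
  also have "\<dots> \<in> lie_center br"
    using coords_in subspace_scale[OF subspace_center] by blast
  finally have "coords (c *\<^sub>R x) = (?u, ?v)"
    using coords_in subspace_scale[OF subspace_a] by (intro coords_eqI) auto
  then show "coords (c *\<^sub>R x) = c *\<^sub>R coords x"
    by (simp add: prod_eq_iff)
qed

lemma coords_T_plus: "u \<in> a \<Longrightarrow> v \<in> a \<Longrightarrow> coords (T u + v) = (u, v)"
  using subspace_0[OF subspace_center] by (intro coords_eqI) simp_all

lemma coords_eq_0_iff: "coords x = 0 \<longleftrightarrow> x \<in> lie_center br"
proof
  assume "coords x = 0"
  then show "x \<in> lie_center br" using coords_in(3)[of x] by (simp add: zero_prod_def)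
next
  assume "x \<in> lie_center br"
  then show "coords x = 0"
    using coords_eqI[of 0 0 x] subspace_0[OF subspace_a] by (simp add: zero_prod_def)
qed

lemma range_coords: "range coords = a \<times> a"
proof
  show "range coords \<subseteq> a \<times> a" using coords_in by (simp add: image_subset_iff mem_Times_iff)
  show "a \<times> a \<subseteq> range coords"
  proof clarify
    fix u v assume "u \<in> a" "v \<in> a"
    then have "(u, v) = coords (T u + v)" by (simp add: coords_T_plus)
    then show "(u, v) \<in> range coords" by (rule range_eqI)
  qed
qed

definition aff_mult :: "'a \<Rightarrow> 'a \<Rightarrow> 'a" where
  "aff_mult u v = snd (coords (br (T u) v))"

lemma aff_mult_in: "aff_mult u v \<in> a"
  unfolding aff_mult_def by (rule coords_in)

lemma aff_mult_add_left: "aff_mult (u + v) w = aff_mult u w + aff_mult v w"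
  by (simp add: aff_mult_def linear_add[OF linear_coords])

lemma aff_mult_scaleR_left: "aff_mult (c *\<^sub>R u) w = c *\<^sub>R aff_mult u w"
  by (simp add: aff_mult_def linear_scale[OF linear_coords])

lemma bracket_T_minus_aff_mult:
  assumes "u \<in> a" "v \<in> a"
  shows "br (T u) v - aff_mult u v \<in> lie_center br"
proof -
  obtain w where "w \<in> a" "br (T u) v - w \<in> lie_center br"
    using bracket_T_a[OF assms] by blast
  then have "coords (br (T u) v) = (0, w)"
    using subspace_0[OF subspace_a] by (intro coords_eqI) simp_all
  then have "aff_mult u v = w" by (simp add: aff_mult_def)
  with \<open>br (T u) v - w \<in> lie_center br\<close> show ?thesis by (simp only:)
qed

lemma bracket_aff_mult:
  assumes "u \<in> a" "v \<in> a"
  shows "br y (aff_mult u v) = br y (br (T u) v)"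
proof -
  have "br y (br (T u) v - aff_mult u v) = 0"
    by (rule center_bracket_right[OF bracket_T_minus_aff_mult[OF assms]])
  then show ?thesis by simp
qed

lemma aff_mult_commute:
  assumes "u \<in> a" "v \<in> a"
  shows "aff_mult u v = aff_mult v u"
proof -
  have "coords (br (T u) v - br (T v) u) = 0"
    unfolding coords_eq_0_iff by (rule bracket_T_a_symmetric[OF assms])
  then show ?thesis by (simp add: aff_mult_def linear_diff[OF linear_coords])
qed

lemma aff_mult_assoc:
  assumes "u \<in> a" "v \<in> a" "w \<in> a"
  shows "aff_mult (aff_mult u v) w = aff_mult u (aff_mult v w)"
proof -
  have "br (br (T w) (T u)) v = 0"
    by (rule center_bracket_left[OF bracket_T_T[OF assms(3,1)]])
  then have leibniz: "br (T w) (br (T u) v) = br (T u) (br (T w) v)"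
    using bracket_leibniz[of "T w" "T u" v] by simp
  have "aff_mult (aff_mult u v) w = aff_mult w (aff_mult u v)"
    using aff_mult_commute assms aff_mult_in by blast
  also have "\<dots> = snd (coords (br (T w) (br (T u) v)))"
    unfolding aff_mult_def[of w] using bracket_aff_mult assms by simp
  also have "\<dots> = snd (coords (br (T u) (br (T w) v)))"
    by (simp only: leibniz)
  also have "\<dots> = aff_mult u (aff_mult w v)"
    unfolding aff_mult_def[of u] using bracket_aff_mult assms by simp
  also have "\<dots> = aff_mult u (aff_mult v w)"
    using aff_mult_commute assms by simp
  finally show ?thesis .
qed

lemma fd_comm_assoc_algebra_aff_mult: "fd_comm_assoc_algebra a aff_mult"
  unfolding fd_comm_assoc_algebra_def
proof (intro conjI ballI allI)
  obtain B where B: "B \<subseteq> a" "independent B" "a \<subseteq> span B" by (rule basis_exists)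
  then have "span B = a"
    using span_minimal[OF B(1) subspace_a] by blast
  with B show "\<exists>B. finite B \<and> B \<subseteq> a \<and> span B = a"
    using independent_bound by blast
next
  fix u v w assume "u \<in> a" "v \<in> a" "w \<in> a"
  then show "aff_mult (aff_mult u v) w = aff_mult u (aff_mult v w)" by (rule aff_mult_assoc)
qed (simp_all add: subspace_a aff_mult_in aff_mult_commute aff_mult_add_left aff_mult_scaleR_left)

lemma coords_bracket: "coords (br x y) = aff_bracket aff_mult (coords x) (coords y)"
proof -
  obtain u v u' v' where uv: "coords x = (u, v)" "coords y = (u', v')"
    by (meson surj_pair)
  then have in_a: "u \<in> a" "v \<in> a" "u' \<in> a" "v' \<in> a"
    using coords_in[of x] coords_in[of y] by auto
  define c where "c = x - T u - v"
  define c' where "c' = y - T u' - v'"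
  have c: "c \<in> lie_center br" "c' \<in> lie_center br"
    unfolding c_def c'_def using coords_in[of x] coords_in[of y] uv by auto
  have "br x y = br (T u + v + c) (T u' + v' + c')"
    unfolding c_def c'_def by simp
  also have "\<dots> = br (T u) (T u') + br v v' + br (T u) v' - br (T u') v"
    using c bracket_antisym[of v "T u'"] by simp
  finally have "br x y - (aff_mult u v' - aff_mult u' v)
      = br (T u) (T u') + br v v' + (br (T u) v' - aff_mult u v') - (br (T u') v - aff_mult u' v)"
    by (simp add: algebra_simps)
  also have "\<dots> \<in> lie_center br"
    using in_a bracket_T_T bracket_a_a bracket_T_minus_aff_mult
      subspace_add[OF subspace_center] subspace_diff[OF subspace_center] by meson
  finally have "coords (br x y) = (0, aff_mult u v' - aff_mult u' v)"
    using in_a aff_mult_in subspace_0[OF subspace_a] subspace_diff[OF subspace_a]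
    by (intro coords_eqI) simp_all
  then show ?thesis by (simp add: aff_bracket_def uv)
qed

theorem quotient_by_center_iso_aff_mult: "quotient_by_center_iso_aff br a aff_mult"
  unfolding quotient_by_center_iso_aff_def
  using linear_coords range_coords coords_eq_0_iff coords_bracket by blast

end

lemma aff_decomposition_J:
  fixes br :: "'a::euclidean_space \<Rightarrow> 'a \<Rightarrow> 'a"
  assumes "abelian_complex br J" and "subspace a"
    and "\<And>x. \<exists>u\<in>a. \<exists>v\<in>a. x - J u - v \<in> lie_center br"
    and "\<And>u v. u \<in> a \<Longrightarrow> v \<in> a \<Longrightarrow> J u + v \<in> lie_center br \<Longrightarrow> u = 0 \<and> v = 0"
    and "\<And>u v. u \<in> a \<Longrightarrow> v \<in> a \<Longrightarrow> br u v \<in> lie_center br"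
    and "\<And>u v. u \<in> a \<Longrightarrow> v \<in> a \<Longrightarrow> \<exists>w\<in>a. br (J u) v - w \<in> lie_center br"
  shows "aff_decomposition br a J"
proof -
  interpret abelian_complex br J by fact
  show ?thesis
    by unfold_locales
      (simp_all add: assms linear_J bracket_J_left_swap subspace_0[OF subspace_center])
qed

lemma fd_comm_assoc_algebra_linear_image:
  assumes f: "linear f" "inj f" and alg: "fd_comm_assoc_algebra A m"
  shows "fd_comm_assoc_algebra (f ` A) (\<lambda>p q. f (m (inv f p) (inv f q)))"
proof -
  note f_simps = linear_add[OF f(1), symmetric] linear_scale[OF f(1), symmetric] inv_f_f[OF f(2)]
  obtain B where B: "finite B" "B \<subseteq> A" "span B = A"
    using alg by (auto simp: fd_comm_assoc_algebra_def)
  then have "finite (f ` B) \<and> f ` B \<subseteq> f ` A \<and> span (f ` B) = f ` A"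
    using linear_span_image[OF f(1)] by auto
  moreover have "subspace (f ` A)"
    using alg linear_subspace_image[OF f(1)] by (simp add: fd_comm_assoc_algebra_def)
  ultimately show ?thesis
    using alg unfolding fd_comm_assoc_algebra_def by (auto simp: f_simps)
qed

lemma quotient_by_center_iso_aff_linear_image:
  assumes f: "linear f" "inj f" and iso: "quotient_by_center_iso_aff br A m"
  shows "quotient_by_center_iso_aff br (f ` A) (\<lambda>p q. f (m (inv f p) (inv f q)))"
proof -
  obtain \<phi> where \<phi>: "linear \<phi>" "range \<phi> = A \<times> A" "{x. \<phi> x = 0} = lie_center br"
    and hom: "\<And>x y. \<phi> (br x y) = aff_bracket m (\<phi> x) (\<phi> y)"
    using iso unfolding quotient_by_center_iso_aff_def by blast
  define \<psi> where "\<psi> = map_prod f f \<circ> \<phi>"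
  have "linear \<psi>"
    unfolding \<psi>_def using f(1) \<phi>(1)
    by (intro linear_compose) (auto intro!: linearI simp: linear_add linear_scale)
  moreover have "range \<psi> = f ` A \<times> f ` A"
    unfolding \<psi>_def image_comp[symmetric] \<phi>(2) by (rule map_prod_surj_on) (rule refl)+
  moreover have "{x. \<psi> x = 0} = lie_center br"
    unfolding \<psi>_def \<phi>(3)[symmetric]
    using linear_inj_iff_eq_0[OF f(1)] f(2) by (auto simp: zero_prod_def prod_eq_iff linear_0[OF f(1)])
  moreover have "\<psi> (br x y) = aff_bracket (\<lambda>p q. f (m (inv f p) (inv f q))) (\<psi> x) (\<psi> y)" for x y
    by (simp add: \<psi>_def hom aff_bracket_def inv_f_f[OF f(2)] linear_diff[OF f(1)] linear_0[OF f(1)])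
  ultimately show ?thesis
    unfolding quotient_by_center_iso_aff_def by blast
qed

definition basis_coords :: "'a::euclidean_space \<Rightarrow> nat \<Rightarrow> real" where
  "basis_coords x = (\<lambda>n. x \<bullet> from_nat_into Basis n)"

lemma linear_basis_coords: "linear basis_coords"
  by (rule linearI) (auto simp: basis_coords_def fun_eq_iff inner_add_left scaleR_fun_def)

lemma inj_basis_coords: "inj basis_coords"
proof (rule injI)
  fix x y :: 'a assume eq: "basis_coords x = basis_coords y"
  show "x = y"
  proof (rule euclidean_eqI)
    fix b :: 'a assume "b \<in> Basis"
    then have "b \<in> range (from_nat_into Basis)"
      by (simp add: countable_finite)
    then obtain n where "b = from_nat_into Basis n" by blast
    then show "x \<bullet> b = y \<bullet> b"
      using eq unfolding basis_coords_def fun_eq_iff by auto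
  qed
qed

lemma quotient_by_center_iso_aff_nat_fun:
  fixes A :: "'b::euclidean_space set"
  assumes "fd_comm_assoc_algebra A m" "quotient_by_center_iso_aff br A m"
  shows "\<exists>(A' :: (nat \<Rightarrow> real) set) m'. fd_comm_assoc_algebra A' m' \<and>
    quotient_by_center_iso_aff br A' m'"
  using fd_comm_assoc_algebra_linear_image[OF linear_basis_coords inj_basis_coords assms(1)]
    quotient_by_center_iso_aff_linear_image[OF linear_basis_coords inj_basis_coords assms(2)]
  by blast

section \<open>Dimension four\<close>

locale abelian_complex4 = abelian_complex br J for br :: "'a::euclidean_space \<Rightarrow> 'a \<Rightarrow> 'a" and J +
  assumes DIM_4: "DIM('a) = 4"
begin

lemma J_frame_coords:
  assumes "subspace W" "\<And>w. w \<in> W \<Longrightarrow> J w \<in> W" "q \<notin> W" "p \<in> W" "p \<noteq> 0"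
  obtains a b c d where "y = a *\<^sub>R q + b *\<^sub>R J q + c *\<^sub>R p + d *\<^sub>R J p"
  using combination_of_four_independent[OF DIM_4 J_frame_independent[OF assms]] that by blast

lemma J_plane_complement:
  assumes W: "subspace W" "\<And>w. w \<in> W \<Longrightarrow> J w \<in> W" and p: "p \<in> W" "p \<noteq> 0" and q: "q \<notin> W"
  obtains \<alpha> \<beta> where "y - \<alpha> *\<^sub>R q - \<beta> *\<^sub>R J q \<in> W"
proof -
  obtain a b c d where "y = a *\<^sub>R q + b *\<^sub>R J q + c *\<^sub>R p + d *\<^sub>R J p"
    using J_frame_coords[OF W q p] by blast
  moreover have "c *\<^sub>R p + d *\<^sub>R J p \<in> W"
    using W p by (simp add: subspace_add subspace_scale)
  ultimately show ?thesis using that[of a b] by (simp add: algebra_simps)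
qed

lemma aff_decomposition_center_line:
  assumes "lie_center br \<noteq> {0}" and p: "p \<notin> lie_center br"
    and bracket_J_p: "\<exists>w\<in>span {p}. br (J p) p - w \<in> lie_center br"
  shows "aff_decomposition br (span {p}) J"
proof -
  let ?Z = "lie_center br"
  obtain c where c: "c \<in> ?Z" "c \<noteq> 0" using assms(1) subspace_0[OF subspace_center] by blast
  have in_line: "u \<in> span {p} \<longleftrightarrow> (\<exists>s. u = s *\<^sub>R p)" for u
    by (auto simp: span_singleton)
  have line_mem: "s *\<^sub>R p \<in> span {p}" for s
    by (simp add: span_base span_mul)
  show ?thesis
  proof (rule aff_decomposition_J[OF abelian_complex_axioms subspace_span])
    fix y
    obtain \<alpha> \<beta> where "y - \<alpha> *\<^sub>R p - \<beta> *\<^sub>R J p \<in> ?Z"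
      using J_plane_complement[OF subspace_center J_center c p] by blast
    then have "y - J (\<beta> *\<^sub>R p) - \<alpha> *\<^sub>R p \<in> ?Z" by (simp add: algebra_simps)
    then show "\<exists>u\<in>span {p}. \<exists>v\<in>span {p}. y - J u - v \<in> ?Z"
      using line_mem by blast
  next
    fix u v assume "u \<in> span {p}" "v \<in> span {p}" and center: "J u + v \<in> ?Z"
    then obtain s t where st: "u = s *\<^sub>R p" "v = t *\<^sub>R p"
      using in_line by meson
    have "t *\<^sub>R p + s *\<^sub>R J p \<in> ?Z"
      using center by (simp add: st add.commute)
    then have "t = 0 \<and> s = 0"
      using J_pair_independent_modulo[OF subspace_center J_center p] by blast
    with st show "u = 0 \<and> v = 0" by simp
  next
    fix u v assume "u \<in> span {p}" "v \<in> span {p}"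
    then obtain s t where "u = s *\<^sub>R p" "v = t *\<^sub>R p"
      using in_line by meson
    then show "br u v \<in> ?Z"
      using subspace_0[OF subspace_center] by simp
  next
    fix u v assume "u \<in> span {p}" "v \<in> span {p}"
    then obtain s t where st: "u = s *\<^sub>R p" "v = t *\<^sub>R p"
      using in_line by meson
    obtain w where w: "w \<in> span {p}" "br (J p) p - w \<in> ?Z" using bracket_J_p by blast
    have "br (J u) v - (s * t) *\<^sub>R w = (s * t) *\<^sub>R (br (J p) p - w)"
      by (simp add: st algebra_simps)
    also have "\<dots> \<in> ?Z" using w(2) subspace_scale[OF subspace_center] by blast
    finally show "\<exists>w\<in>span {p}. br (J u) v - w \<in> ?Z"
      using span_mul[OF w(1)] by blast
  qed
qed

lemma aff_decomposition_nontrivial_center: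
  assumes "lie_center br \<noteq> {0}" "lie_center br \<noteq> UNIV"
  shows "\<exists>a. aff_decomposition br a J"
proof -
  let ?Z = "lie_center br"
  obtain x where x: "x \<notin> ?Z" using assms(2) by blast
  obtain c where c: "c \<in> ?Z" "c \<noteq> 0" using assms(1) subspace_0[OF subspace_center] by blast
  have bracket_multiple: "\<exists>k. br y y' = k *\<^sub>R br x (J x)" for y y'
  proof -
    obtain \<alpha> \<beta> \<alpha>' \<beta>' where z: "y - \<alpha> *\<^sub>R x - \<beta> *\<^sub>R J x \<in> ?Z" "y' - \<alpha>' *\<^sub>R x - \<beta>' *\<^sub>R J x \<in> ?Z"
      using J_plane_complement[OF subspace_center J_center c x] by metis
    have "br y y' = br ((y - \<alpha> *\<^sub>R x - \<beta> *\<^sub>R J x) + (\<alpha> *\<^sub>R x + \<beta> *\<^sub>R J x))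
        ((y' - \<alpha>' *\<^sub>R x - \<beta>' *\<^sub>R J x) + (\<alpha>' *\<^sub>R x + \<beta>' *\<^sub>R J x))"
      by simp
    also have "\<dots> = br (\<alpha> *\<^sub>R x + \<beta> *\<^sub>R J x) (\<alpha>' *\<^sub>R x + \<beta>' *\<^sub>R J x)"
      by (simp only: bracket_add_left bracket_add_right center_bracket_left[OF z(1)]
          center_bracket_right[OF z(2)] add_0_left add_0_right)
    also have "\<dots> = (\<alpha> * \<beta>' - \<beta> * \<alpha>') *\<^sub>R br x (J x)"
      using bracket_antisym[of x "J x"] by (simp add: algebra_simps)
    finally show ?thesis by blast
  qed
  text \<open>All brackets are multiples of \<open>[x, J x]\<close>: if it is central, \<open>p = x\<close> gives an abelian
    quotient, otherwise \<open>p = [x, J x]\<close> gives \<open>aff(\<real>)\<close>.\<close>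
  obtain p where "p \<notin> ?Z" "\<exists>w\<in>span {p}. br (J p) p - w \<in> ?Z"
  proof (cases "br x (J x) \<in> ?Z")
    case True
    have "br (J x) x - 0 \<in> ?Z"
      unfolding diff_zero bracket_antisym[of "J x" x] by (rule subspace_neg[OF subspace_center True])
    then show ?thesis using that[OF x] span_zero by blast
  next
    case False
    obtain k where "br (J (br x (J x))) (br x (J x)) = k *\<^sub>R br x (J x)"
      using bracket_multiple by blast
    then have "br (J (br x (J x))) (br x (J x)) - k *\<^sub>R br x (J x) \<in> ?Z"
      using subspace_0[OF subspace_center] by simp
    then show ?thesis
      using that[OF False] span_mul[OF span_base[of "br x (J x)" "{br x (J x)}"]] by blast
  qed
  then show ?thesis using aff_decomposition_center_line[OF assms(1)] by blast
qed

lemma derived_algebra_eq_J_span: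
  assumes centerless: "lie_center br = {0}"
    and l: "l \<in> derived_algebra br" "l \<noteq> 0" "J l \<in> derived_algebra br"
  shows "derived_algebra br = span {l, J l}"
proof
  show "span {l, J l} \<subseteq> derived_algebra br"
    using l subspace_derived_algebra by (intro span_minimal) auto
  show "derived_algebra br \<subseteq> span {l, J l}"
  proof
    fix l' assume l': "l' \<in> derived_algebra br"
    show "l' \<in> span {l, J l}"
    proof (rule ccontr)
      assume "l' \<notin> span {l, J l}"
      have "br l y = 0" for y
      proof -
        obtain a b c d where y: "y = a *\<^sub>R l' + b *\<^sub>R J l' + c *\<^sub>R l + d *\<^sub>R J l"
          using J_frame_coords[OF subspace_span J_mem_span_J_pair \<open>l' \<notin> span {l, J l}\<close> span_base l(2)]
          by blast
        have "br l l' = 0" "br (J l) l' = 0" "br (J l) l = 0"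
          using l l' derived_algebra_abelian by blast+
        then show ?thesis by (simp add: y)
      qed
      then have "l \<in> lie_center br" unfolding lie_center_def by blast
      with centerless l(2) show False by simp
    qed
  qed
qed

lemma bracket_surj_on_derived_algebra:
  assumes centerless: "lie_center br = {0}"
    and L: "derived_algebra br = span {l, J l}" "l \<noteq> 0" and v: "v \<notin> span {l, J l}"
  shows "br v ` span {l, J l} = span {l, J l}"
proof (rule linear_inj_on_imp_surj_on)
  let ?W = "span {l, J l}"
  have J_L: "J q \<in> derived_algebra br" if "q \<in> derived_algebra br" for q
    using that J_mem_span_J_pair unfolding L by blast
  have complement: "\<exists>\<alpha> \<beta>. y - \<alpha> *\<^sub>R v - \<beta> *\<^sub>R J v \<in> derived_algebra br" for y
  proof -
    obtain \<alpha> \<beta> where "y - \<alpha> *\<^sub>R v - \<beta> *\<^sub>R J v \<in> ?W"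
      using J_plane_complement[OF subspace_span J_mem_span_J_pair span_base L(2) v] by blast
    then show ?thesis unfolding L by blast
  qed
  show "inj_on (br v) ?W"
  proof (rule inj_onI)
    fix x y assume "x \<in> ?W" "y \<in> ?W" "br v x = br v y"
    then have "x - y \<in> derived_algebra br" "br v (x - y) = 0"
      unfolding L by (simp_all add: span_diff)
    then have "x - y = 0" using ad_inj_on_derived_algebra[OF centerless J_L complement] by blast
    then show "x = y" by simp
  qed
  show "linear (br v)" by (rule linearI) simp_all
  show "br v ` ?W \<subseteq> ?W" using bracket_in_derived_algebra L(1) by auto
qed simp

lemma complex_frame_decomposition:
  assumes L: "l \<noteq> 0" and v: "v \<notin> span {l, J l}" and y2: "y2 - J v \<in> span {l, J l}"
    and T: "linear T" "T l = v" "T (J l) = - y2"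
  shows "\<exists>u\<in>span {l, J l}. \<exists>w\<in>span {l, J l}. x - T u - w = 0"
    and "u \<in> span {l, J l} \<Longrightarrow> w \<in> span {l, J l} \<Longrightarrow> T u + w = 0 \<Longrightarrow> u = 0 \<and> w = 0"
proof -
  let ?W = "span {l, J l}"
  have T_comb: "T (s *\<^sub>R l + t *\<^sub>R J l) = s *\<^sub>R v - t *\<^sub>R y2" for s t
    using T by (simp add: linear_add linear_scale)
  have l_W: "l \<in> ?W" "J l \<in> ?W" by (simp_all add: span_base)
  obtain a b c d where x: "x = a *\<^sub>R v + b *\<^sub>R J v + c *\<^sub>R l + d *\<^sub>R J l"
    using J_frame_coords[OF subspace_span J_mem_span_J_pair v span_base L] by blast
  have "a *\<^sub>R l + (- b) *\<^sub>R J l \<in> ?W" "c *\<^sub>R l + d *\<^sub>R J l - b *\<^sub>R (y2 - J v) \<in> ?W"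
    using l_W y2 by (simp_all add: span_add span_diff span_mul)
  moreover have "x - T (a *\<^sub>R l + (- b) *\<^sub>R J l) - (c *\<^sub>R l + d *\<^sub>R J l - b *\<^sub>R (y2 - J v)) = 0"
    unfolding T_comb x by (simp add: algebra_simps)
  ultimately show "\<exists>u\<in>?W. \<exists>w\<in>?W. x - T u - w = 0" by blast
next
  let ?W = "span {l, J l}"
  assume "u \<in> ?W" "w \<in> ?W" "T u + w = 0"
  then obtain s t where u: "u = s *\<^sub>R l + t *\<^sub>R J l" using in_span_pair_iff by meson
  have "s *\<^sub>R v + (- t) *\<^sub>R J v = - w + t *\<^sub>R (y2 - J v)"
    using \<open>T u + w = 0\<close> T unfolding u by (simp add: linear_add linear_scale algebra_simps eq_neg_iff_add_eq_0)
  also have "\<dots> \<in> ?W"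
    using \<open>w \<in> ?W\<close> y2 by (simp add: span_add span_diff span_mul span_neg)
  finally have "s = 0 \<and> - t = 0"
    using J_pair_independent_modulo[OF subspace_span J_mem_span_J_pair v] by blast
  with \<open>T u + w = 0\<close> show "u = 0 \<and> w = 0" using T(1) by (simp add: u linear_0)
qed

text \<open>\<open>v\<close> and \<open>y2\<close> span an abelian complement of the ideal \<open>span {l, J l}\<close>, and \<open>T\<close>
  identifies the two planes.\<close>

lemma aff_decomposition_complex_frame:
  assumes centerless: "lie_center br = {0}"
    and L: "derived_algebra br = span {l, J l}" "l \<noteq> 0" and v: "v \<notin> span {l, J l}"
    and y2: "y2 - J v \<in> span {l, J l}" "br v y2 = 0"
    and T: "linear T" "T l = v" "T (J l) = - y2"
  shows "aff_decomposition br (span {l, J l}) T"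
proof -
  let ?W = "span {l, J l}"
  have T_comb: "T (s *\<^sub>R l + t *\<^sub>R J l) = s *\<^sub>R v - t *\<^sub>R y2" for s t
    using T by (simp add: linear_add linear_scale)
  have abelian: "br u u' = 0" if "u \<in> ?W" "u' \<in> ?W" for u u'
    using that L(1) derived_algebra_abelian by simp
  show ?thesis
  proof (unfold_locales, unfold centerless singleton_iff)
    show "\<exists>u\<in>?W. \<exists>w\<in>?W. x - T u - w = 0" for x
      by (rule complex_frame_decomposition(1)[OF L(2) v y2(1) T])
    show "u = 0 \<and> w = 0" if "u \<in> ?W" "w \<in> ?W" "T u + w = 0" for u w
      using complex_frame_decomposition(2)[OF L(2) v y2(1) T] that by blast
  next
    fix u u' assume "u \<in> ?W" "u' \<in> ?W"
    then obtain s t s' t' where "u = s *\<^sub>R l + t *\<^sub>R J l" "u' = s' *\<^sub>R l + t' *\<^sub>R J l"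
      using in_span_pair_iff by meson
    moreover have "br y2 v = 0" using y2(2) bracket_antisym[of y2 v] by simp
    ultimately show "br (T u) (T u') = 0"
      using y2(2) by (simp add: T_comb)
  next
    fix u u' assume "u \<in> ?W" "u' \<in> ?W"
    then show "br u u' = 0" by (rule abelian)
  next
    fix u u'
    show "\<exists>w\<in>?W. br (T u) u' - w = 0"
      using bracket_in_derived_algebra L(1) by auto
  next
    fix u u' assume "u \<in> ?W" "u' \<in> ?W"
    then obtain s t s' t' where u: "u = s *\<^sub>R l + t *\<^sub>R J l" and u': "u' = s' *\<^sub>R l + t' *\<^sub>R J l"
      using in_span_pair_iff by meson
    have "y2 - J v \<in> ?W" "l \<in> ?W" "J l \<in> ?W" using y2(1) by (simp_all add: span_base)
    then have "br (y2 - J v) l = 0" "br (y2 - J v) (J l) = 0"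
      using abelian by blast+
    then show "br (T u) u' - br (T u') u = 0"
      unfolding u u' T_comb by (simp add: algebra_simps)
  qed (simp_all add: linear_add[OF T(1)] linear_scale[OF T(1)])
qed

lemma aff_decomposition_derived_complex_line:
  assumes centerless: "lie_center br = {0}"
    and l: "l \<in> derived_algebra br" "l \<noteq> 0" "J l \<in> derived_algebra br"
  shows "\<exists>a T. aff_decomposition br a T"
proof -
  let ?W = "span {l, J l}"
  have L: "derived_algebra br = ?W" by (rule derived_algebra_eq_J_span[OF centerless l])
  obtain v where v: "v \<notin> ?W"
  proof -
    have "l \<notin> lie_center br" using centerless l(2) by simp
    then obtain y where "br l y \<noteq> 0" unfolding lie_center_def by blast
    moreover have "br l y = 0" if "y \<in> ?W"
      using derived_algebra_abelian[OF l(1)] that L by simp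
    ultimately show ?thesis using that by blast
  qed
  have "- br v (J v) \<in> ?W"
    using bracket_in_derived_algebra[of br "J v" v] L by simp
  then obtain l2 where l2: "l2 \<in> ?W" "br v l2 = - br v (J v)"
    using bracket_surj_on_derived_algebra[OF centerless L l(2) v] by (metis imageE)
  define y2 where "y2 = J v + l2"
  obtain T where T: "linear T" "T l = v" "T (J l) = - y2"
  proof -
    have indep: "independent {l, J l}" "J l \<noteq> l"
      using independent_J_pair[OF l(2)] by auto
    obtain g where g: "linear g" "\<forall>x\<in>{l, J l}. g x = (if x = l then v else - y2)"
      using linear_independent_extend[OF indep(1), of "\<lambda>x. if x = l then v else - y2"] by blast
    with indep(2) have "g l = v" "g (J l) = - y2" by simp_all
    with g(1) show ?thesis by (rule that)
  qed
  have "y2 - J v \<in> ?W" "br v y2 = 0" using l2 by (simp_all add: y2_def)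
  then have "aff_decomposition br ?W T"
    by (rule aff_decomposition_complex_frame[OF centerless L l(2) v _ _ T])
  then show ?thesis by blast
qed

lemma not_in_J_span_if_totally_real:
  assumes totally_real: "\<And>q. q \<in> derived_algebra br \<Longrightarrow> J q \<in> derived_algebra br \<Longrightarrow> q = 0"
    and l: "l1 \<in> derived_algebra br" "l1 \<noteq> 0" "l2 \<in> derived_algebra br" "l2 \<notin> span {l1}"
  shows "l2 \<notin> span {l1, J l1}"
proof
  assume "l2 \<in> span {l1, J l1}"
  then obtain s t where st: "l2 = s *\<^sub>R l1 + t *\<^sub>R J l1" using in_span_pair_iff by meson
  show False
  proof (cases "t = 0")
    case True
    then have "l2 \<in> span {l1}" using st by (simp add: span_mul span_base)
    with l(4) show False ..
  next
    case False
    then have "J l1 = inverse t *\<^sub>R (l2 - s *\<^sub>R l1)" using st by simp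
    also have "\<dots> \<in> derived_algebra br"
      using l unfolding derived_algebra_def by (simp add: span_mul span_diff)
    finally have "l1 = 0" using totally_real l(1) by blast
    with l(2) show False ..
  qed
qed

lemma aff_decomposition_derived_totally_real:
  assumes centerless: "lie_center br = {0}"
    and totally_real: "\<And>q. q \<in> derived_algebra br \<Longrightarrow> J q \<in> derived_algebra br \<Longrightarrow> q = 0"
    and l: "l1 \<in> derived_algebra br" "l1 \<noteq> 0" "l2 \<in> derived_algebra br" "l2 \<notin> span {l1}"
  shows "aff_decomposition br (derived_algebra br) J"
proof -
  let ?L = "derived_algebra br"
  have L_closed: "s *\<^sub>R x + t *\<^sub>R y \<in> ?L" if "x \<in> ?L" "y \<in> ?L" for s t x y
    using that unfolding derived_algebra_def by (simp add: span_add span_mul)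
  show ?thesis
  proof (rule aff_decomposition_J[OF abelian_complex_axioms subspace_derived_algebra],
      unfold centerless singleton_iff)
    fix y
    obtain p q r s where y: "y = p *\<^sub>R l2 + q *\<^sub>R J l2 + r *\<^sub>R l1 + s *\<^sub>R J l1"
      using J_frame_coords[OF subspace_span J_mem_span_J_pair
          not_in_J_span_if_totally_real[OF totally_real l] span_base l(2)]
      by blast
    have "q *\<^sub>R l2 + s *\<^sub>R l1 \<in> ?L" "p *\<^sub>R l2 + r *\<^sub>R l1 \<in> ?L"
      using l by (simp_all add: L_closed)
    moreover have "y - J (q *\<^sub>R l2 + s *\<^sub>R l1) - (p *\<^sub>R l2 + r *\<^sub>R l1) = 0"
      by (simp add: y algebra_simps)
    ultimately show "\<exists>u\<in>?L. \<exists>v\<in>?L. y - J u - v = 0" by blast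
  next
    fix u v assume "u \<in> ?L" "v \<in> ?L" "J u + v = 0"
    then have "J u = - v" by (simp add: eq_neg_iff_add_eq_0)
    with \<open>v \<in> ?L\<close> have "J u \<in> ?L" using L_closed[of v v "-1" 0] by simp
    with \<open>u \<in> ?L\<close> have "u = 0" by (rule totally_real)
    with \<open>J u + v = 0\<close> show "u = 0 \<and> v = 0" by simp
  next
    fix u v assume "u \<in> ?L" "v \<in> ?L"
    then show "br u v = 0" by (rule derived_algebra_abelian)
  next
    fix u v
    show "\<exists>w\<in>?L. br (J u) v - w = 0" using bracket_in_derived_algebra by auto
  qed
qed

lemma exists_aff_decomposition_centerless:
  assumes centerless: "lie_center br = {0}"
  shows "\<exists>a T. aff_decomposition br a T"
proof (cases "\<exists>l\<in>derived_algebra br. l \<noteq> 0 \<and> J l \<in> derived_algebra br")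
  case True
  then show ?thesis using aff_decomposition_derived_complex_line[OF centerless] by blast
next
  case False
  then have totally_real: "q = 0" if "q \<in> derived_algebra br" "J q \<in> derived_algebra br" for q
    using that by blast
  obtain l1 where l1: "l1 \<in> derived_algebra br" "l1 \<noteq> 0"
  proof -
    obtain x where "x \<notin> lie_center br"
      using centerless nonzero_Basis SOME_Basis by blast
    then obtain y where "br x y \<noteq> 0" unfolding lie_center_def by blast
    then show ?thesis using that bracket_in_derived_algebra by blast
  qed
  show ?thesis
  proof (cases "derived_algebra br \<subseteq> span {l1}")
    case True
    then have "DIM('a) \<le> 2"
      using centerless_derived_line_DIM_le_2[OF lie centerless] bracket_in_derived_algebra
      by blast
    with DIM_4 show ?thesis by simp
  next
    case False
    then obtain l2 where "l2 \<in> derived_algebra br" "l2 \<notin> span {l1}" by blast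
    then show ?thesis
      using aff_decomposition_derived_totally_real[OF centerless totally_real l1] by blast
  qed
qed

lemma exists_aff_decomposition: "\<exists>a T. aff_decomposition br a T"
proof -
  consider "lie_center br = UNIV" | "lie_center br \<noteq> {0}" "lie_center br \<noteq> UNIV"
    | "lie_center br = {0}"
    by blast
  then show ?thesis
  proof cases
    case 1
    have "aff_decomposition br {0} J"
      by (rule aff_decomposition_J[OF abelian_complex_axioms]) (simp_all add: 1)
    then show ?thesis by blast
  next
    case 2
    then show ?thesis using aff_decomposition_nontrivial_center by blast
  next
    case 3
    then show ?thesis by (rule exists_aff_decomposition_centerless)
  qed
qed

end

theorem mainTheorem11:
  fixes br :: "'a::euclidean_space \<Rightarrow> 'a \<Rightarrow> 'a"
  assumes "DIM('a) = 4"
    and "lie_algebra br"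
    and "\<exists>J. abelian_complex_structure br J"
  shows "\<exists>(A :: (nat \<Rightarrow> real) set) m. fd_comm_assoc_algebra A m \<and>
           quotient_by_center_iso_aff br A m"
proof -
  obtain J where "abelian_complex_structure br J" using assms(3) by blast
  with assms(1,2) interpret abelian_complex4 br J
    by unfold_locales
  obtain a T where "aff_decomposition br a T" using exists_aff_decomposition by blast
  then interpret aff_decomposition br a T .
  show ?thesis
    by (rule quotient_by_center_iso_aff_nat_fun[OF fd_comm_assoc_algebra_aff_mult
          quotient_by_center_iso_aff_mult])
qed

end
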